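(* Fix $\xi\in[0,0.13]$ and let $y_i\in[\cos(2\pi/9),1)$ for all $i\in\{2,3,5,6\}$. Then for any $j\in\{2,3,5,6\}$ with $y_j,y_{j'}\le\cos(2\pi/10)$, one has $$\frac{\partial\psi_\xi}{\partial y_j}(\delta,y_2,y_3,y_5,y_6)\ge0\quad\text{and}\quad\frac{\partial\psi_\xi}{\partial y_{j'}}(\delta,y_2,y_3,y_5,y_6)\ge0$$ for all $\delta\in[0,0.13]$.
   Context: Pairing: $2'=6$, $3'=5$, $5'=3$, $6'=2$. For $\xi\ge0$, $y\in(0,1)$: $\eta_\xi(y)=\frac{-2-5y+(1+\xi)^2+\sqrt{(2+5y-(1+\xi)^2)^2+4(2+y)(1-y)(1+\xi)^2}}{2+y}$. Let $b(y)=\frac{16}{y+1}-7$, $c_n=\cos(2\pi/n)$, $\beta(y)=b(y)$ on $[c_{10},1]$ and $\beta(y)=\frac{(2-b(c_{10}))b(y)-(2-b(c_9))b(c_{10})}{b(c_9)-b(c_{10})}$ on $[c_9,c_{10}]$. Define $$G(\delta,\eta_2,\eta_3,\eta_5,\eta_6,\beta_2,\beta_3,\beta_5,\beta_6)=\frac{1+\dfrac{\delta[(1+\eta_2)(1+\eta_5)+(1+\eta_3)(1+\eta_6)]-2\delta(\delta+2)}{(2+\eta_2+\eta_6)(2+\eta_3+\eta_5)}}{\sqrt{1+\dfrac{\delta^2+2(1+\beta_2\beta_6)\delta}{(2+\eta_2+\eta_6)^2}}\sqrt{1+\dfrac{\delta^2+2(1+\beta_3\beta_5)\delta}{(2+\eta_3+\eta_5)^2}}}$$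 and $\psi_\xi(\delta,y_2,y_3,y_5,y_6)=G(\delta,\eta_\xi(y_2),\eta_\xi(y_3),\eta_\xi(y_5),\eta_\xi(y_6),\beta(y_2),\beta(y_3),\beta(y_5),\beta(y_6))$. *)

theory Defs
  imports "HOL-Analysis.Analysis"
begin

definition pairing :: "nat \<Rightarrow> nat" where
  "pairing j = (if j = 2 then 6 else if j = 3 then 5 else if j = 5 then 3 else if j = 6 then 2 else j)"

definition eta :: "real \<Rightarrow> real \<Rightarrow> real" where
  "eta \<xi> y = (-2 - 5*y + (1+\<xi>)^2
      + sqrt ((2 + 5*y - (1+\<xi>)^2)^2 + 4*(2+y)*(1-y)*(1+\<xi>)^2)) / (2+y)"

definition bfun :: "real \<Rightarrow> real" where
  "bfun y = 16 / (y+1) - 7"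

definition cn :: "nat \<Rightarrow> real" where
  "cn n = cos (2*pi / real n)"

definition beta :: "real \<Rightarrow> real" where
  "beta y = (if cn 10 \<le> y then bfun y
     else ((2 - bfun (cn 10)) * bfun y - (2 - bfun (cn 9)) * bfun (cn 10))
          / (bfun (cn 9) - bfun (cn 10)))"

definition G :: "real \<Rightarrow> real \<Rightarrow> real \<Rightarrow> real \<Rightarrow> real \<Rightarrow> real \<Rightarrow> real \<Rightarrow> real \<Rightarrow> real \<Rightarrow> real" where
  "G \<delta> e2 e3 e5 e6 b2 b3 b5 b6 =
     (1 + (\<delta> * ((1+e2)*(1+e5) + (1+e3)*(1+e6)) - 2*\<delta>*(\<delta>+2)) / ((2+e2+e6)*(2+e3+e5)))
     / (sqrt (1 + (\<delta>^2 + 2*(1 + b2*b6)*\<delta>) / (2+e2+e6)^2)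
        * sqrt (1 + (\<delta>^2 + 2*(1 + b3*b5)*\<delta>) / (2+e3+e5)^2))"

definition psi :: "real \<Rightarrow> real \<Rightarrow> (nat \<Rightarrow> real) \<Rightarrow> real" where
  "psi \<xi> \<delta> y = G \<delta> (eta \<xi> (y 2)) (eta \<xi> (y 3)) (eta \<xi> (y 5)) (eta \<xi> (y 6))
                       (beta (y 2)) (beta (y 3)) (beta (y 5)) (beta (y 6))"

end

theory Submission
  imports Defs
begin

(* On [cos(2 pi/9), cos(2 pi/10)] the weight beta is an increasing affine function of the
   decreasing function b(y) = 16/(y+1) - 7, and its slope in y is at most -3.5, while eta
   takes values in [0, 0.13] with slope in [-0.72, 0].  By the symmetries of G only its first slot has to be varied.
   Writing G = N / (sqrt A * sqrt C), where only the numerator N and the first radicand A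
   depend on y_j, the quotient rule reduces the sign of the derivative to that of
   N' A - N A' / 2.  After factoring out delta / (2 + eta_2 + eta_6)^2 the contribution of
   beta_j is at least 0.92 * 1.8445 * 3.5 > 5.93, whereas all terms driven by eta_j are
   bounded by 0.72 * 7.997 < 5.76. *)

lemma cn9_bounds: "766/1000 \<le> cn 9 \<and> cn 9 \<le> 7661/10000"
proof -
  define c where "c = cos (2*pi/9)"
  have "cos (3 * (2*pi/9)) = 4*c^3 - 3*c"
    unfolding c_def by (rule cos_treble_cos)
  then have root: "8*c^3 - 6*c + 1 = 0"
    using cos_120 by simp
  have "cos (pi/4) < c"
    unfolding c_def by (rule cos_monotone_0_pi) (auto simp: pi_gt_zero)
  moreover have "7/5 < sqrt 2" by (rule real_less_rsqrt) (simp add: power2_eq_square)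
  ultimately have c_gt: "7/10 < c" using cos_45 by simp
  have factor: "(x - c) * (8*(x*x + x*c + c*c) - 6) = 8*x^3 - 6*x + 1" and
    factor_pos: "8*(x*x + x*c + c*c) - 6 > 0" if "7/10 \<le> x" for x
  proof -
    show "(x - c) * (8*(x*x + x*c + c*c) - 6) = 8*x^3 - 6*x + 1"
      using root by (simp add: algebra_simps power3_eq_cube)
    have "x*x \<ge> 49/100" "c*c \<ge> 49/100" "x*c \<ge> 49/100"
      using that c_gt mult_mono[of "7/10" x "7/10" x] mult_mono[of "7/10" c "7/10" c]
        mult_mono[of "7/10" x "7/10" c] by auto
    then show "8*(x*x + x*c + c*c) - 6 > 0" by simp
  qed
  have below_root: "x \<le> c" if "7/10 \<le> x" "8*x^3 - 6*x + 1 \<le> 0" for x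
    using factor[OF that(1)] factor_pos[OF that(1)] that(2)
      mult_pos_pos[of "x - c" "8*(x*x + x*c + c*c) - 6"] by fastforce
  have above_root: "c \<le> x" if "7/10 \<le> x" "8*x^3 - 6*x + 1 \<ge> 0" for x
    using factor[OF that(1)] factor_pos[OF that(1)] that(2)
      mult_neg_pos[of "x - c" "8*(x*x + x*c + c*c) - 6"] by fastforce
  have "766/1000 \<le> c" by (rule below_root) (simp_all add: power3_eq_cube)
  moreover have "c \<le> 7661/10000" by (rule above_root) (simp_all add: power3_eq_cube)
  ultimately show ?thesis by (simp add: cn_def c_def)
qed

lemma cn10_bounds: "80901/100000 \<le> cn 10 \<and> cn 10 \<le> 80903/100000"
proof -
  define c where "c = cos (pi/5)"
  have "3 * (pi/5) = pi - 2 * (pi/5)" by simp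
  then have "cos (3 * (pi/5)) = - cos (2 * (pi/5))" by (simp only: cos_pi_minus)
  moreover have "cos (3 * (pi/5)) = 4*c^3 - 3*c" unfolding c_def by (rule cos_treble_cos)
  moreover have "cos (2 * (pi/5)) = 2*c^2 - 1" unfolding c_def by (rule cos_double_cos)
  ultimately have product: "(c + 1) * (4*c^2 - 2*c - 1) = 0"
    by (simp add: algebra_simps power2_eq_square power3_eq_cube)
  have "cos (pi/4) < c"
    unfolding c_def by (rule cos_monotone_0_pi) (auto simp: pi_gt_zero)
  moreover have "7/5 < sqrt 2" by (rule real_less_rsqrt) (simp add: power2_eq_square)
  ultimately have c_gt: "7/10 < c" using cos_45 by simp
  then have root: "4*c^2 - 2*c - 1 = 0" using product by simp
  have factor: "(x - c) * (4*(x + c) - 2) = 4*x^2 - 2*x - 1" for x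
    using root by (simp add: algebra_simps power2_eq_square)
  have below_root: "x \<le> c" if "7/10 \<le> x" "4*x^2 - 2*x - 1 \<le> 0" for x
    using factor[of x] that c_gt mult_pos_pos[of "x - c" "4*(x + c) - 2"] by fastforce
  have above_root: "c \<le> x" if "7/10 \<le> x" "4*x^2 - 2*x - 1 \<ge> 0" for x
    using factor[of x] that c_gt mult_neg_pos[of "x - c" "4*(x + c) - 2"] by fastforce
  have "80901/100000 \<le> c" by (rule below_root) (simp_all add: power2_eq_square)
  moreover have "c \<le> 80903/100000" by (rule above_root) (simp_all add: power2_eq_square)
  ultimately show ?thesis by (simp add: cn_def c_def)
qed

lemma bfun_cn9_bounds: "20595/10000 \<le> bfun (cn 9) \<and> bfun (cn 9) \<le> 20601/10000"
proof -
  have "766/1000 \<le> cn 9" "cn 9 \<le> 7661/10000" using cn9_bounds by auto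
  then have "20595/10000 + 7 \<le> 16 / (cn 9 + 1)" "16 / (cn 9 + 1) \<le> 20601/10000 + 7"
    by (simp_all add: le_divide_eq divide_le_eq)
  then show ?thesis unfolding bfun_def by auto
qed

lemma bfun_cn10_bounds: "18445/10000 \<le> bfun (cn 10) \<and> bfun (cn 10) \<le> 18447/10000"
proof -
  have "80901/100000 \<le> cn 10" "cn 10 \<le> 80903/100000" using cn10_bounds by auto
  then have "18445/10000 + 7 \<le> 16 / (cn 10 + 1)" "16 / (cn 10 + 1) \<le> 18447/10000 + 7"
    by (simp_all add: le_divide_eq divide_le_eq)
  then show ?thesis unfolding bfun_def by auto
qed

lemma bfun_antimono: "-1 < s \<Longrightarrow> s \<le> t \<Longrightarrow> bfun t \<le> bfun s"
  unfolding bfun_def by (simp add: divide_left_mono)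

(* The branch of beta below cn 10, extended to all reals: the affine function of bfun that
   agrees with bfun at cn 10 and equals 2 at cn 9. *)
definition beta_lower :: "real \<Rightarrow> real" where
  "beta_lower t = ((2 - bfun (cn 10)) * bfun t - (2 - bfun (cn 9)) * bfun (cn 10))
                  / (bfun (cn 9) - bfun (cn 10))"

lemma beta_eq_beta_lower: "t \<le> cn 10 \<Longrightarrow> beta t = beta_lower t"
proof (cases "t = cn 10")
  case True
  have "bfun (cn 9) - bfun (cn 10) \<noteq> 0" using bfun_cn9_bounds bfun_cn10_bounds by simp
  then show ?thesis unfolding True beta_def beta_lower_def by (simp add: field_simps)
qed (simp add: beta_def beta_lower_def)

lemma beta_lower_bounds:
  assumes "cn 9 \<le> t" "t \<le> cn 10"
  shows "bfun (cn 10) \<le> beta_lower t \<and> beta_lower t \<le> 2"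
proof -
  define b9 b10 where "b9 = bfun (cn 9)" and "b10 = bfun (cn 10)"
  have "b10 < 2" "b10 < b9" using bfun_cn9_bounds bfun_cn10_bounds b9_def b10_def by auto
  moreover have "b10 \<le> bfun t" "bfun t \<le> b9"
    unfolding b9_def b10_def using assms cn9_bounds by (auto intro!: bfun_antimono)
  ultimately have "0 \<le> (2 - b10) * (bfun t - b10) / (b9 - b10)"
    and "0 \<le> (2 - b10) * (b9 - bfun t) / (b9 - b10)" by simp_all
  moreover have "beta_lower t - b10 = (2 - b10) * (bfun t - b10) / (b9 - b10)"
    and "2 - beta_lower t = (2 - b10) * (b9 - bfun t) / (b9 - b10)"
    unfolding beta_lower_def b9_def[symmetric] b10_def[symmetric] using \<open>b10 < b9\<close>
    by (simp_all add: field_simps)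
  ultimately show ?thesis unfolding b10_def[symmetric] by linarith
qed

lemma beta_bounds:
  assumes "cn 9 \<le> t" "t \<le> cn 10"
  shows "18445/10000 \<le> beta t \<and> beta t \<le> 2"
  using beta_lower_bounds[OF assms] beta_eq_beta_lower[OF assms(2)] bfun_cn10_bounds by auto

lemma beta_nonneg:
  assumes "cn 9 \<le> t" "t \<le> 1"
  shows "0 \<le> beta t"
proof (cases "t \<le> cn 10")
  case True
  then show ?thesis using beta_bounds assms by fastforce
next
  case False
  have "bfun 1 \<le> bfun t" using assms cn9_bounds by (intro bfun_antimono) auto
  then show ?thesis using False by (simp add: beta_def bfun_def)
qed

lemma beta_has_real_derivative_le:
  assumes t: "t \<in> {cn 9..cn 10}"
  shows "\<exists>bp. (beta has_real_derivative bp) (at t within {cn 9..cn 10}) \<and> bp \<le> -35/10"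
proof -
  define b9 b10 where "b9 = bfun (cn 9)" and "b10 = bfun (cn 10)"
  have b9: "20595/10000 \<le> b9" "b9 \<le> 20601/10000" using bfun_cn9_bounds b9_def by auto
  have b10: "18445/10000 \<le> b10" "b10 \<le> 18447/10000" using bfun_cn10_bounds b10_def by auto
  have t1: "t + 1 > 0" "t + 1 \<le> 180903/100000" using t cn9_bounds cn10_bounds by auto
  have gap: "b9 - b10 > 0" using b9 b10 by simp
  define bp where "bp = - 16 * (2 - b10) / ((b9 - b10) * (t + 1)^2)"
  have "(bfun has_real_derivative - 16 / (t + 1)^2) (at t)"
    unfolding bfun_def[abs_def] using t1
    by (auto intro!: derivative_eq_intros simp: power2_eq_square)
  then have "(beta_lower has_real_derivative (2 - b10) * (- 16 / (t + 1)^2) / (b9 - b10)) (at t)"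
    unfolding beta_lower_def[abs_def] b9_def[symmetric] b10_def[symmetric] using gap
    by (auto intro!: derivative_eq_intros)
  moreover have "(2 - b10) * (- 16 / (t + 1)^2) / (b9 - b10) = bp"
    unfolding bp_def using gap t1(1) by (simp add: field_simps)
  ultimately have "(beta has_real_derivative bp) (at t within {cn 9..cn 10})"
    using t by (rule_tac has_field_derivative_transform_within[OF _ zero_less_one])
      (auto intro: has_field_derivative_at_within simp: beta_eq_beta_lower)
  moreover have "bp \<le> -35/10"
  proof -
    have "(t + 1)^2 \<le> (180903/100000)^2" using t1 by (intro power_mono) auto
    then have "(b9 - b10) * (t + 1)^2 \<le> 2156/10000 * (180903/100000)^2"
      using b9 b10 t1 by (intro mult_mono) auto
    then have "35/10 * ((b9 - b10) * (t + 1)^2) \<le> 16 * (2 - b10)" using b10 by (simp add: power_divide)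
    moreover have "(b9 - b10) * (t + 1)^2 > 0" using gap t1 by simp
    ultimately show ?thesis unfolding bp_def by (simp add: field_simps)
  qed
  ultimately show ?thesis by blast
qed

(* eta is the nonnegative root of (2 + y) e^2 + 2 (2 + 5 y - a) e - 4 (1 - y) a = 0;
   differentiating this relation implicitly gives the formula, whose denominator equals
   twice the square root in the definition of eta. *)
lemma eta_has_real_derivative:
  assumes "0 \<le> \<xi>" "-2 < y" "y < 1"
  defines "a \<equiv> (1 + \<xi>)^2"
  shows "(eta \<xi> has_real_derivative
           - (eta \<xi> y ^ 2 + 10 * eta \<xi> y + 4 * a) / (2 * ((2 + y) * eta \<xi> y + (2 + 5*y - a)))) (at y)"
proof -
  define p q where "p = 2 + y" and "q = 2 + 5*y - a"
  define r where "r = sqrt (q^2 + 4*p*(1-y)*a)"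
  have "a \<ge> 1" unfolding a_def using assms(1) by (simp add: one_le_power)
  then have radicand_pos: "q^2 + 4*p*(1-y)*a > 0"
    unfolding p_def using assms(2,3) by (intro add_nonneg_pos) auto
  then have r: "r > 0" "r^2 = q^2 + 4*p*(1-y)*a" unfolding r_def by auto
  have p: "p > 0" unfolding p_def using assms(2) by simp
  have eta_y: "eta \<xi> y = (r - q) / p"
    unfolding eta_def r_def p_def q_def a_def by (simp add: algebra_simps)
  define D where "D = ((-5 + (10*q - 4*a*(1 + 2*y)) / (2*r)) * p - (r - q)) / p^2"
  have deriv: "(eta \<xi> has_real_derivative D) (at y)"
    unfolding eta_def[abs_def] a_def[symmetric] D_def using radicand_pos p
    by (auto intro!: derivative_eq_intros simp: p_def q_def r_def)
      (simp add: field_simps power2_eq_square)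
  have "p^2 * (D * (2*r) + ((r - q)/p)^2 + 10*((r - q)/p) + 4*a)
      = (10*q - 4*a*(1 + 2*y) - 10*r)*p - 2*r*(r - q) + (r - q)^2 + 10*(r - q)*p + 4*a*p^2"
    unfolding D_def using r(1) p by (simp add: field_simps power2_eq_square)
  also have "\<dots> = q^2 + 4*p*(1-y)*a - r^2"
    unfolding p_def by (simp add: algebra_simps power2_eq_square)
  finally have "D * (2*r) + eta \<xi> y ^ 2 + 10 * eta \<xi> y + 4*a = 0"
    using r(2) p eta_y by simp
  moreover have "(2 + y) * eta \<xi> y + (2 + 5*y - a) = r"
    using eta_y p unfolding p_def q_def by simp
  ultimately have "D = - (eta \<xi> y ^ 2 + 10 * eta \<xi> y + 4 * a) / (2 * ((2 + y) * eta \<xi> y + (2 + 5*y - a)))"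
    using r(1) by (simp add: field_simps)
  with deriv show ?thesis by simp
qed

lemma eta_bounds:
  assumes "\<xi> \<in> {0..13/100}" "766/1000 \<le> y" "y < 1"
  shows "0 \<le> eta \<xi> y \<and> eta \<xi> y \<le> 13/100"
proof -
  define a p q where "a = (1 + \<xi>)^2" and "p = 2 + y" and "q = 2 + 5*y - a"
  define S where "S = q^2 + 4*p*(1-y)*a"
  have a: "1 \<le> a" "a \<le> (113/100)^2"
    unfolding a_def using assms(1) by (auto intro: one_le_power power_mono)
  have p: "p > 0" and q: "q \<ge> 0" using assms a unfolding p_def q_def by (auto simp: power2_eq_square)
  have eta_y: "eta \<xi> y = (sqrt S - q) / p"
    unfolding eta_def S_def p_def q_def a_def by (simp add: algebra_simps)
  have "q^2 \<le> S" unfolding S_def using p assms(3) a by simp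
  then have "q \<le> sqrt S" using q real_le_rsqrt by blast
  moreover have "S \<le> (13/100*p + q)^2"
  proof -
    have "a*(426/100 - 4*y) \<le> (113/100)^2 * (426/100 - 4*y)"
      using a assms(3) by (intro mult_right_mono) auto
    moreover have "169/10000*p + 26/100*q - 4*(1-y)*a = 5538/10000 + 13169/10000*y - a*(426/100 - 4*y)"
      unfolding p_def q_def by (simp add: field_simps)
    ultimately have "0 \<le> 169/10000*p + 26/100*q - 4*(1-y)*a"
      using assms(2) by (simp add: power2_eq_square)
    then have "0 \<le> p * (169/10000*p + 26/100*q - 4*(1-y)*a)" using p by simp
    moreover have "(13/100*p + q)^2 - S = p * (169/10000*p + 26/100*q - 4*(1-y)*a)"
      unfolding S_def by (simp add: algebra_simps power2_eq_square)
    ultimately show ?thesis by linarith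
  qed
  then have "sqrt S \<le> 13/100*p + q" using p q by (intro real_le_lsqrt) auto
  ultimately show ?thesis unfolding eta_y using p by (simp add: divide_le_eq)
qed

lemma eta_derivative_bounds:
  assumes "\<xi> \<in> {0..13/100}" "766/1000 \<le> y" "y < 1"
  shows "\<exists>ep. (eta \<xi> has_real_derivative ep) (at y) \<and> ep \<in> {-72/100..0}"
proof -
  define a e where "a = (1 + \<xi>)^2" and "e = eta \<xi> y"
  have a: "1 \<le> a" "a \<le> (113/100)^2"
    unfolding a_def using assms(1) by (auto intro: one_le_power power_mono)
  have e: "0 \<le> e" "e \<le> 13/100" using eta_bounds[OF assms] e_def by auto
  have num: "0 \<le> e^2 + 10*e + 4*a" "e^2 + 10*e + 4*a \<le> 64245/10000"
    using e a mult_mono[OF e(2) e(2)] e by (auto simp: power2_eq_square)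
  have "0 \<le> (2 + y) * e" using e assms(2) by simp
  then have den: "45531/10000 \<le> (2 + y) * e + (2 + 5*y - a)"
    using assms(2) a by (simp add: power2_eq_square)
  define ep where "ep = - ((e^2 + 10*e + 4*a) / (2 * ((2 + y) * e + (2 + 5*y - a))))"
  have deriv: "(eta \<xi> has_real_derivative ep) (at y)"
    using eta_has_real_derivative[of \<xi> y] assms
    unfolding ep_def minus_divide_left a_def e_def by simp
  have "(e^2 + 10*e + 4*a) / (2 * ((2 + y) * e + (2 + 5*y - a))) \<le> (64245/10000) / (2 * (45531/10000))"
    using num den by (intro frac_le) auto
  also have "\<dots> \<le> 72/100" by simp
  finally have "-72/100 \<le> ep" unfolding ep_def by linarith
  moreover have "ep \<le> 0" unfolding ep_def using num den by simp
  ultimately show ?thesis using deriv by auto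
qed

definition G_num :: "real \<Rightarrow> real \<Rightarrow> real \<Rightarrow> real \<Rightarrow> real \<Rightarrow> real" where
  "G_num \<delta> e2 e3 e5 e6 =
     1 + (\<delta> * ((1+e2)*(1+e5) + (1+e3)*(1+e6)) - 2*\<delta>*(\<delta>+2)) / ((2+e2+e6)*(2+e3+e5))"

definition G_rad :: "real \<Rightarrow> real \<Rightarrow> real \<Rightarrow> real \<Rightarrow> real \<Rightarrow> real" where
  "G_rad \<delta> e e' b b' = 1 + (\<delta>^2 + 2*(1 + b*b')*\<delta>) / (2+e+e')^2"

lemma G_eq_G_num_div_G_rad:
  "G \<delta> e2 e3 e5 e6 b2 b3 b5 b6
     = G_num \<delta> e2 e3 e5 e6 / (sqrt (G_rad \<delta> e2 e6 b2 b6) * sqrt (G_rad \<delta> e3 e5 b3 b5))"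
  unfolding G_def G_num_def G_rad_def ..

lemma G_num_bounds:
  assumes "\<delta> \<in> {0..13/100}" "e2 \<in> {0..13/100}" "e3 \<in> {0..13/100}" "e5 \<in> {0..13/100}" "e6 \<in> {0..13/100}"
  shows "92/100 \<le> G_num \<delta> e2 e3 e5 e6 \<and> G_num \<delta> e2 e3 e5 e6 \<le> 1"
proof -
  define M where "M = (1+e2)*(1+e5) + (1+e3)*(1+e6) - 2*(\<delta>+2)"
  define P where "P = (2+e2+e6)*(2+e3+e5)"
  have prod: "1 \<le> (1+x)*(1+z) \<and> (1+x)*(1+z) \<le> (113/100)^2"
    if "x \<in> {0..13/100}" "z \<in> {0..13/100}" for x z :: real
    using that mult_mono[of "1+x" "113/100" "1+z" "113/100"] mult_mono[of 1 "1+x" 1 "1+z"]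
    by (auto simp: power2_eq_square)
  have M: "-226/100 \<le> M" "M \<le> 0"
    using prod[OF assms(2,4)] prod[OF assms(3,5)] assms(1) unfolding M_def by (auto simp: power2_eq_square)
  have P: "4 \<le> P" unfolding P_def using assms mult_mono[of 2 "2+e2+e6" 2 "2+e3+e5"] by auto
  have "\<delta> * M / P \<le> 0" using M P assms(1) by (simp add: divide_nonpos_pos mult_nonneg_nonpos)
  moreover have "- (\<delta> * M) \<le> 13/100 * (226/100)"
    using mult_mono[of \<delta> "13/100" "-M" "226/100"] M assms(1) by simp
  then have "- (\<delta> * M) / P \<le> 13/100 * (226/100) / 4"
    using P by (rule_tac frac_le) auto
  moreover have "G_num \<delta> e2 e3 e5 e6 = 1 + \<delta> * M / P"
    unfolding G_num_def M_def P_def by (simp add: algebra_simps)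
  ultimately show ?thesis by simp
qed

lemma G_rad_ge_1: "0 \<le> \<delta> \<Longrightarrow> 0 \<le> b \<Longrightarrow> 0 \<le> b' \<Longrightarrow> 1 \<le> G_rad \<delta> e e' b b'"
  unfolding G_rad_def by simp

lemma G_rad_bounds:
  assumes "\<delta> \<in> {0..13/100}" "0 \<le> e" "0 \<le> e'" "b \<in> {0..2}" "b' \<in> {0..2}"
  shows "1 \<le> G_rad \<delta> e e' b b' \<and> G_rad \<delta> e e' b b' \<le> 13293/10000"
proof -
  define c where "c = \<delta> + 2*(1 + b*b')"
  have "b*b' \<le> 2*2" using assms(4,5) by (intro mult_mono) auto
  then have c: "0 \<le> c" "c \<le> 1013/100" using assms(1,4,5) unfolding c_def by auto
  have "\<delta> * c \<le> 13/100 * (1013/100)" using assms(1) c by (intro mult_mono) auto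
  moreover have "4 \<le> (2+e+e')^2" using assms(2,3) power_mono[of 2 "2+e+e'" 2] by simp
  ultimately have "\<delta> * c / (2+e+e')^2 \<le> 13/100 * (1013/100) / 4"
    using assms(1) c by (rule_tac frac_le) auto
  moreover have "G_rad \<delta> e e' b b' = 1 + \<delta> * c / (2+e+e')^2"
    unfolding G_rad_def c_def by (simp add: algebra_simps power2_eq_square)
  ultimately show ?thesis using G_rad_ge_1[of \<delta> b b' e e'] assms(1,4,5) by auto
qed

lemma DERIV_divide_sqrt:
  fixes f g :: "real \<Rightarrow> real"
  assumes "(f has_real_derivative f') (at t within S)" "(g has_real_derivative g') (at t within S)"
    and "0 < g t" "c \<noteq> 0"
  shows "((\<lambda>x. f x / (sqrt (g x) * c)) has_real_derivative
           (f' * g t - f t * g' / 2) / (g t * sqrt (g t) * c)) (at t within S)"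
proof -
  define r where "r = sqrt (g t)"
  have r: "0 < r" "g t = r * r" unfolding r_def using assms(3) by auto
  have "((\<lambda>x. f x / (sqrt (g x) * c)) has_real_derivative
         (f' * (r * c) - f t * (g' * (inverse r / 2) * c)) / ((r * c) * (r * c))) (at t within S)"
    unfolding r_def using assms by (auto intro!: derivative_eq_intros)
  moreover have "(f' * (r * c) - f t * (g' * (inverse r / 2) * c)) / ((r * c) * (r * c))
      = (f' * (r * r) - f t * g' / 2) / ((r * r) * r * c)"
    using r(1) assms(4) by (simp add: field_simps)
  ultimately show ?thesis unfolding r_def[symmetric] unfolding r(2) by simp
qed

lemma G_num_has_real_derivative_first_slot:
  assumes "(\<eta> has_real_derivative ep) (at t within S)" "2 + \<eta> t + e6 \<noteq> 0" "2 + e3 + e5 \<noteq> 0"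
  shows "((\<lambda>x. G_num \<delta> (\<eta> x) e3 e5 e6) has_real_derivative
           ep * \<delta> * ((1+e6)*(e5-e3) + 2*\<delta> + 4) / ((2 + \<eta> t + e6)^2 * (2+e3+e5))) (at t within S)"
proof -
  define w v P where "w = 2 + \<eta> t + e6" and "v = 2 + e3 + e5"
    and "P = (1 + \<eta> t)*(1+e5) + (1+e3)*(1+e6)"
  have "((\<lambda>x. G_num \<delta> (\<eta> x) e3 e5 e6) has_real_derivative
      (\<delta> * (ep * (1+e5)) * (w * v) - (\<delta> * P - 2*\<delta>*(\<delta>+2)) * (ep * v)) / ((w * v) * (w * v)))
      (at t within S)"
    unfolding G_num_def w_def v_def P_def using assms by (auto intro!: derivative_eq_intros)
  moreover have "(\<delta> * (ep * (1+e5)) * (w * v) - (\<delta> * P - 2*\<delta>*(\<delta>+2)) * (ep * v)) / ((w * v) * (w * v))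
      = ep * \<delta> * ((1+e5)*w - P + 2*\<delta> + 4) / (w^2 * v)"
    using assms(2,3) unfolding w_def[symmetric] v_def[symmetric] by (simp add: field_simps power2_eq_square)
  moreover have "(1+e5)*w - P = (1+e6)*(e5-e3)"
    unfolding w_def P_def by (simp add: algebra_simps)
  ultimately show ?thesis unfolding w_def v_def by simp
qed

lemma G_rad_has_real_derivative_first_slot:
  assumes "(\<eta> has_real_derivative ep) (at t within S)" "(\<beta> has_real_derivative bp) (at t within S)"
    and "2 + \<eta> t + e' \<noteq> 0"
  shows "((\<lambda>x. G_rad \<delta> (\<eta> x) e' (\<beta> x) b') has_real_derivative
           2*\<delta>*b'*bp / (2 + \<eta> t + e')^2 - 2*\<delta>*(\<delta> + 2*(1 + \<beta> t*b'))*ep / (2 + \<eta> t + e')^3)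
           (at t within S)"
proof -
  define w where "w = 2 + \<eta> t + e'"
  have "((\<lambda>x. G_rad \<delta> (\<eta> x) e' (\<beta> x) b') has_real_derivative
      ((2*(bp*b')*\<delta>) * w^2 - (\<delta>^2 + 2*(1 + \<beta> t*b')*\<delta>) * (2*w*ep)) / (w^2 * w^2)) (at t within S)"
    unfolding G_rad_def w_def using assms by (auto intro!: derivative_eq_intros simp: power2_eq_square)
  moreover have "((2*(bp*b')*\<delta>) * w^2 - (\<delta>^2 + 2*(1 + \<beta> t*b')*\<delta>) * (2*w*ep)) / (w^2 * w^2)
      = 2*\<delta>*b'*bp / w^2 - 2*\<delta>*(\<delta> + 2*(1 + \<beta> t*b'))*ep / w^3"
    using assms(3) unfolding w_def[symmetric] by (simp add: field_simps power2_eq_square power3_eq_cube)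
  ultimately show ?thesis unfolding w_def by simp
qed

lemma G_first_slot_derivative_numerator_nonneg:
  fixes \<delta> e e3 e5 e6 b b6 ep bp :: real
  assumes "\<delta> \<in> {0..13/100}" "e \<in> {0..13/100}" "e3 \<in> {0..13/100}" "e5 \<in> {0..13/100}"
    and "e6 \<in> {0..13/100}" "b \<in> {0..2}" "b6 \<in> {18445/10000..2}"
    and "ep \<in> {-72/100..0}" "bp \<le> -35/10"
  defines "w \<equiv> 2 + e + e6" and "v \<equiv> 2 + e3 + e5"
  shows "0 \<le> ep * \<delta> * ((1+e6)*(e5-e3) + 2*\<delta> + 4) / (w^2 * v) * G_rad \<delta> e e6 b b6
             - G_num \<delta> e e3 e5 e6 * (2*\<delta>*b6*bp / w^2 - 2*\<delta>*(\<delta> + 2*(1 + b*b6))*ep / w^3) / 2"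
proof -
  define N A K c where "N = G_num \<delta> e e3 e5 e6" and "A = G_rad \<delta> e e6 b b6"
    and "K = (1+e6)*(e5-e3) + 2*\<delta> + 4" and "c = \<delta> + 2*(1 + b*b6)"
  have N: "92/100 \<le> N" "N \<le> 1" using G_num_bounds[OF assms(1-5)] N_def by auto
  have A: "1 \<le> A" "A \<le> 13293/10000"
    using G_rad_bounds[of \<delta> e e6 b b6] assms(1,2,5-7) A_def by auto
  have w: "2 \<le> w" and v: "2 \<le> v" using assms(2-5) unfolding w_def v_def by auto
  have "(1+e6)*e5 \<le> 113/100 * (13/100)" "(1+e6)*e3 \<le> 113/100 * (13/100)"
    using assms(3-5) by (intro mult_mono; simp)+
  moreover have "0 \<le> (1+e6)*e3" "0 \<le> (1+e6)*e5" using assms(3-5) by simp_all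
  moreover have "K = (1+e6)*e5 - (1+e6)*e3 + 2*\<delta> + 4" unfolding K_def by (simp add: algebra_simps)
  ultimately have K: "0 \<le> K" "K \<le> 441/100" using assms(1) by auto
  have "b*b6 \<le> 2*2" using assms(6,7) by (intro mult_mono) auto
  then have c: "0 \<le> c" "c \<le> 1013/100" using assms(1,6,7) unfolding c_def by auto
  have "K*A \<le> 441/100 * (13293/10000)" using K A by (intro mult_mono) auto
  then have "K*A/v \<le> 441/100 * (13293/10000) / 2" using K A v by (rule_tac frac_le) auto
  moreover have "N*c \<le> 1013/100" using mult_mono[OF N(2) c(2)] N c by simp
  then have "N*c/w \<le> 1013/100 / 2" using N c w by (rule_tac frac_le) auto
  ultimately have "K*A/v + N*c/w \<le> 7997/1000" by linarith
  moreover have "0 \<le> K*A/v + N*c/w" using K A N c v w by simp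
  ultimately have Z: "0 \<le> K*A/v + N*c/w" "K*A/v + N*c/w \<le> 7997/1000" by simp_all
  have "-ep * (K*A/v + N*c/w) \<le> 72/100 * (7997/1000)" using assms(8) Z by (intro mult_mono) auto
  moreover have "92/100 * (18445/10000) * (35/10) \<le> N * b6 * (-bp)"
    using N assms(7,9) by (intro mult_mono) auto
  ultimately have "0 \<le> N * b6 * (-bp) + ep * (K*A/v + N*c/w)" by simp
  moreover have "ep * \<delta> * K / (w^2 * v) * A - N * (2*\<delta>*b6*bp / w^2 - 2*\<delta>*c*ep / w^3) / 2
      = \<delta> / w^2 * (N * b6 * (-bp) + ep * (K*A/v + N*c/w))"
    using v w by (simp add: field_simps power2_eq_square power3_eq_cube)
  ultimately show ?thesis using assms(1) unfolding N_def A_def K_def c_def by simp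
qed

lemma G_first_slot_has_nonneg_derivative:
  assumes "(\<eta> has_real_derivative ep) (at t within S)" "(\<beta> has_real_derivative bp) (at t within S)"
    and "\<delta> \<in> {0..13/100}" "\<eta> t \<in> {0..13/100}" "e3 \<in> {0..13/100}" "e5 \<in> {0..13/100}"
    and "e6 \<in> {0..13/100}" "\<beta> t \<in> {0..2}" "b6 \<in> {18445/10000..2}" "0 \<le> b3" "0 \<le> b5"
    and "ep \<in> {-72/100..0}" "bp \<le> -35/10"
  shows "\<exists>D. ((\<lambda>x. G \<delta> (\<eta> x) e3 e5 e6 (\<beta> x) b3 b5 b6) has_real_derivative D) (at t within S)
             \<and> 0 \<le> D"
proof -
  define g c where "g = G_rad \<delta> (\<eta> t) e6 (\<beta> t) b6" and "c = sqrt (G_rad \<delta> e3 e5 b3 b5)"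
  have "2 + \<eta> t + e6 \<noteq> 0" "2 + e3 + e5 \<noteq> 0" using assms(4-7) by auto
  note slopes = G_num_has_real_derivative_first_slot[OF assms(1) this, of \<delta>]
    G_rad_has_real_derivative_first_slot[OF assms(1,2) this(1), of \<delta> b6]
  have g: "0 < g" and c: "0 < c"
    using G_rad_ge_1 assms(3,8-11) unfolding g_def c_def by (auto intro: less_le_trans[OF zero_less_one])
  have "0 < g * sqrt g * c" using g c by simp
  with G_first_slot_derivative_numerator_nonneg[OF assms(3-9,12-13)]
  have "0 \<le> (ep * \<delta> * ((1+e6)*(e5-e3) + 2*\<delta> + 4) / ((2 + \<eta> t + e6)^2 * (2+e3+e5)) * g
          - G_num \<delta> (\<eta> t) e3 e5 e6 * (2*\<delta>*b6*bp / (2 + \<eta> t + e6)^2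
             - 2*\<delta>*(\<delta> + 2*(1 + \<beta> t*b6))*ep / (2 + \<eta> t + e6)^3) / 2) / (g * sqrt g * c)"
    unfolding g_def by simp
  with DERIV_divide_sqrt[OF slopes, of c] g c show ?thesis
    unfolding G_eq_G_num_div_G_rad c_def[symmetric] g_def by auto
qed

lemma G_eta_beta_has_nonneg_derivative:
  assumes "\<xi> \<in> {0..13/100}" "\<delta> \<in> {0..13/100}" "t \<in> {cn 9..cn 10}" "z6 \<in> {cn 9..cn 10}"
    and "z3 \<in> {cn 9..<1}" "z5 \<in> {cn 9..<1}"
  shows "\<exists>D. ((\<lambda>x. G \<delta> (eta \<xi> x) (eta \<xi> z3) (eta \<xi> z5) (eta \<xi> z6) (beta x) (beta z3) (beta z5) (beta z6))
                 has_real_derivative D) (at t within {cn 9..cn 10}) \<and> 0 \<le> D"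
proof -
  have eta: "eta \<xi> z \<in> {0..13/100}" if "z \<in> {cn 9..<1}" for z
    using eta_bounds[OF assms(1)] that cn9_bounds by auto
  have "cn 10 < 1" using cn10_bounds by simp
  then have t: "t \<in> {cn 9..<1}" and z6: "z6 \<in> {cn 9..<1}" using assms(3,4) by auto
  obtain ep where ep: "(eta \<xi> has_real_derivative ep) (at t)" "ep \<in> {-72/100..0}"
    using eta_derivative_bounds[OF assms(1), of t] t cn9_bounds by auto
  obtain bp where bp: "(beta has_real_derivative bp) (at t within {cn 9..cn 10})" "bp \<le> -35/10"
    using beta_has_real_derivative_le[OF assms(3)] by blast
  have beta: "beta t \<in> {0..2}" "beta z6 \<in> {18445/10000..2}"
    using beta_bounds assms(3,4) by fastforce+
  have "0 \<le> beta z3" "0 \<le> beta z5" using beta_nonneg assms(5,6) by fastforce+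
  from G_first_slot_has_nonneg_derivative[OF has_field_derivative_at_within[OF ep(1)] bp(1)
      assms(2) eta[OF t] eta[OF assms(5)] eta[OF assms(6)] eta[OF z6] beta this ep(2) bp(2)]
  show ?thesis .
qed

lemma pairing_involutive: "j \<in> {2,3,5,6} \<Longrightarrow> pairing (pairing j) = j"
  by (auto simp: pairing_def)

lemma pairing_in: "j \<in> {2,3,5,6} \<Longrightarrow> pairing j \<in> {2,3,5,6}"
  by (auto simp: pairing_def)

lemma psi_fun_upd_eq_G_first_slot:
  assumes "k \<in> {2,3,5,6}"
  obtains a b where "a \<in> {2,3,5,6}" "b \<in> {2,3,5,6}"
    and "\<And>t. psi \<xi> \<delta> (y(k := t)) =
           G \<delta> (eta \<xi> t) (eta \<xi> (y a)) (eta \<xi> (y b)) (eta \<xi> (y (pairing k)))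
             (beta t) (beta (y a)) (beta (y b)) (beta (y (pairing k)))"
proof -
  consider "k = 2" | "k = 3" | "k = 5" | "k = 6" using assms by blast
  then show thesis
  proof cases
    case 1
    show ?thesis by (rule that[of 3 5]) (simp_all add: 1 psi_def pairing_def)
  next
    case 2
    show ?thesis by (rule that[of 2 6]) (simp_all add: 2 psi_def pairing_def G_def ac_simps)
  next
    case 3
    show ?thesis by (rule that[of 6 2]) (simp_all add: 3 psi_def pairing_def G_def ac_simps)
  next
    case 4
    show ?thesis by (rule that[of 5 3]) (simp_all add: 4 psi_def pairing_def G_def ac_simps)
  qed
qed

theorem lemma4p4:
  fixes \<xi> :: real and y :: "nat \<Rightarrow> real" and j :: nat
  assumes "0 \<le> \<xi>" and "\<xi> \<le> 13/100"
    and "\<And>i. i \<in> {2,3,5,6} \<Longrightarrow> cn 9 \<le> y i \<and> y i < 1"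
    and "j \<in> {2,3,5,6}"
    and "y j \<le> cn 10" and "y (pairing j) \<le> cn 10"
  shows "\<forall>\<delta>\<in>{0..13/100}. \<forall>k\<in>{j, pairing j}.
           \<exists>D. ((\<lambda>t. psi \<xi> \<delta> (y(k := t))) has_real_derivative D) (at (y k) within {cn 9..cn 10})
               \<and> D \<ge> 0"
proof (intro ballI)
  fix \<delta> :: real and k :: nat assume \<delta>: "\<delta> \<in> {0..13/100}" and k: "k \<in> {j, pairing j}"
  have k_range: "k \<in> {2,3,5,6}" "pairing k \<in> {2,3,5,6}"
    using k assms(4) pairing_in by auto
  have "pairing k \<in> {j, pairing j}" using k assms(4) pairing_involutive by auto
  then have "y k \<le> cn 10" "y (pairing k) \<le> cn 10" using k assms(5,6) by auto
  then have y_range: "y k \<in> {cn 9..cn 10}" "y (pairing k) \<in> {cn 9..cn 10}"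
    using assms(3) k_range by auto
  obtain a b where "a \<in> {2,3,5,6}" "b \<in> {2,3,5,6}" and psi_eq:
    "\<And>t. psi \<xi> \<delta> (y(k := t)) =
       G \<delta> (eta \<xi> t) (eta \<xi> (y a)) (eta \<xi> (y b)) (eta \<xi> (y (pairing k)))
         (beta t) (beta (y a)) (beta (y b)) (beta (y (pairing k)))"
    using psi_fun_upd_eq_G_first_slot[OF k_range(1)] by blast
  then show "\<exists>D. ((\<lambda>t. psi \<xi> \<delta> (y(k := t))) has_real_derivative D) (at (y k) within {cn 9..cn 10})
               \<and> D \<ge> 0"
    unfolding psi_eq using assms(1-3) \<delta> y_range
    by (intro G_eta_beta_has_nonneg_derivative) auto
qed

end
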